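(* Let $\ell,k$ be integers with $1\le\ell\le k$. Then $\overline{\alpha}(\{1,2k,2k+2\ell\})\ge\frac{2k}{4k+2\ell}$.
   Context: For a finite set $S$ of positive integers, the distance graph $G(S)$ has vertex set $\mathbb{Z}$, with $i,j$ adjacent iff $|i-j|\in S$. The density of $A\subseteq\mathbb{Z}$ is $\delta(A)=\limsup_{N\to\infty}\frac{|A\cap[-N,N]|}{2N+1}$, and the independence ratio $\overline{\alpha}(S)$ is the supremum of $\delta(A)$ over independent sets $A$ of $G(S)$. *)

theory Defs
  imports "HOL-Analysis.Analysis"
begin

definition dist_adj :: "nat set \<Rightarrow> int \<Rightarrow> int \<Rightarrow> bool" where
  "dist_adj S i j \<longleftrightarrow> \<bar>i - j\<bar> \<in> int ` S"

definition dist_independent :: "nat set \<Rightarrow> int set \<Rightarrow> bool" where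
  "dist_independent S A \<longleftrightarrow> (\<forall>i\<in>A. \<forall>j\<in>A. \<not> dist_adj S i j)"

definition upper_density :: "int set \<Rightarrow> ereal" where
  "upper_density A = limsup (\<lambda>N::nat. ereal (real (card (A \<inter> {- int N..int N})) / (2 * real N + 1)))"

definition independence_ratio :: "nat set \<Rightarrow> ereal" where
  "independence_ratio S = (SUP A\<in>{A. dist_independent S A}. upper_density A)"

end

theory Submission
  imports Defs "HOL-Real_Asymp.Real_Asymp"
begin

(* Let p = 4k + 2l and take the integers whose residue mod p lies in
   {0, 2, ..., 2k - 2} \<union> {2k + 1, 2k + 3, ..., 4k - 1}; this set has density 2k/p.
   It is independent because 2k + 2l = -2k (mod p), so the forbidden differences are,
   modulo p, just +-1 and +-2k: two residues from the same block differ by an even number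
   of absolute value below 2k, and residues from different blocks by an odd number of
   absolute value between 3 and 4k - 1 < p - 1. *)

lemma dist_independent_periodic:
  fixes p :: int
  assumes "\<And>a b d. a \<in> R \<Longrightarrow> b \<in> R \<Longrightarrow> d \<in> S \<Longrightarrow> (a - b) mod p \<noteq> int d mod p"
  shows "dist_independent S {x. x mod p \<in> R}"
  unfolding dist_independent_def dist_adj_def
proof (intro ballI notI)
  fix x y assume x: "x \<in> {x. x mod p \<in> R}" and y: "y \<in> {x. x mod p \<in> R}"
    and "\<bar>x - y\<bar> \<in> int ` S"
  then obtain d where "d \<in> S" and "x - y = int d \<or> y - x = int d"
    by (auto simp: abs_if split: if_splits)
  then show False
    using assms[of "x mod p" "y mod p" d] assms[of "y mod p" "x mod p" d] x y
    by (auto simp: mod_diff_eq)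
qed

lemma card_periodic_inter_interval_ge:
  fixes p n :: nat and R :: "int set"
  assumes "R \<subseteq> {0..<int p}"
  shows "2 * n * card R \<le> card ({x. x mod int p \<in> R} \<inter> {- int (n * p)..int (n * p)})"
proof -
  define f where "f = (\<lambda>(q, r). q * int p + r)"
  have f_mod: "f (q, r) mod int p = r" if "r \<in> R" for q r
    using that assms unfolding f_def by auto
  have "inj_on f ({- int n..<int n} \<times> R)"
  proof (rule inj_onI, clarsimp)
    fix q r q' r' assume "r \<in> R" "r' \<in> R" "f (q, r) = f (q', r')"
    then have "r = r'" by (metis f_mod)
    then show "q = q' \<and> r = r'"
      using \<open>f (q, r) = f (q', r')\<close> \<open>r \<in> R\<close> assms unfolding f_def by auto
  qed
  moreover have "f ` ({- int n..<int n} \<times> R)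
      \<subseteq> {x. x mod int p \<in> R} \<inter> {- int (n * p)..int (n * p)}"
  proof clarify
    fix q r assume q: "q \<in> {- int n..<int n}" and r: "r \<in> R"
    have "- int n * int p \<le> q * int p" "q * int p \<le> (int n - 1) * int p"
      using q by (intro mult_right_mono; simp)+
    then show "f (q, r) \<in> {x. x mod int p \<in> R} \<inter> {- int (n * p)..int (n * p)}"
      using f_mod[OF r] r assms unfolding f_def by (force simp: algebra_simps)
  qed
  ultimately have "card ({- int n..<int n} \<times> R)
      \<le> card ({x. x mod int p \<in> R} \<inter> {- int (n * p)..int (n * p)})"
    by (metis card_image card_mono finite_Int finite_atLeastAtMost_int)
  then show ?thesis
    by (simp add: card_cartesian_product nat_mult_distrib)
qed

lemma upper_density_periodic_ge:
  fixes p :: nat and R :: "int set"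
  assumes "0 < p" and "R \<subseteq> {0..<int p}"
  shows "ereal (card R / p) \<le> upper_density {x. x mod int p \<in> R}"
proof -
  define A where "A = {x. x mod int p \<in> R}"
  define F where "F = (\<lambda>N::nat. ereal (card (A \<inter> {- int N..int N}) / (2 * real N + 1)))"
  have "(\<lambda>n. 2 * n * card R / (2 * real (n * p) + 1)) \<longlonglongrightarrow> card R / p"
    using assms(1) by real_asymp (simp add: divide_inverse)
  then have "ereal (card R / p) = limsup (\<lambda>n. ereal (2 * n * card R / (2 * real (n * p) + 1)))"
    by (intro lim_imp_Limsup[symmetric] tendsto_ereal) simp_all
  also have "\<dots> \<le> limsup (F \<circ> (\<lambda>n. n * p))"
  proof (intro Limsup_mono always_eventually allI)
    fix n
    have "real (2 * n * card R) \<le> card (A \<inter> {- int (n * p)..int (n * p)})"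
      using card_periodic_inter_interval_ge[OF assms(2)] unfolding A_def of_nat_le_iff .
    then show "ereal (2 * n * card R / (2 * real (n * p) + 1)) \<le> (F \<circ> (\<lambda>n. n * p)) n"
      unfolding F_def by (simp add: divide_right_mono add_pos_nonneg)
  qed
  also have "\<dots> \<le> limsup F"
    by (rule limsup_subseq_mono) (simp add: assms(1) strict_mono_def)
  finally show ?thesis
    unfolding upper_density_def F_def A_def .
qed

definition parity_blocks :: "nat \<Rightarrow> int set" where
  "parity_blocks k = {2 * int i | i. i < k} \<union> {2 * int (k + i) + 1 | i. i < k}"

lemma parity_blocks_subset: "parity_blocks k \<subseteq> {0..<int (4 * k)}"
  unfolding parity_blocks_def by auto

lemma card_parity_blocks: "card (parity_blocks k) = 2 * k"
proof -
  have "parity_blocks k = (\<lambda>i. 2 * int i) ` {..<k} \<union> (\<lambda>i. 2 * int (k + i) + 1) ` {..<k}"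
    unfolding parity_blocks_def by auto
  moreover have "card ((\<lambda>i. 2 * int i) ` {..<k}) = k" "card ((\<lambda>i. 2 * int (k + i) + 1) ` {..<k}) = k"
    by (simp_all add: card_image inj_on_def)
  moreover have "(\<lambda>i. 2 * int i) ` {..<k} \<inter> (\<lambda>i. 2 * int (k + i) + 1) ` {..<k} = {}"
    by auto
  ultimately show ?thesis
    by (simp add: card_Un_disjoint)
qed

lemma parity_blocks_diff:
  assumes "a \<in> parity_blocks k" "b \<in> parity_blocks k"
  shows "even (a - b) \<and> \<bar>a - b\<bar> < 2 * int k \<or> odd (a - b) \<and> 1 < \<bar>a - b\<bar> \<and> \<bar>a - b\<bar> < 4 * int k"
proof -
  obtain i where i: "i < k" "a = 2 * int i \<or> a = 2 * int (k + i) + 1"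
    using assms(1) unfolding parity_blocks_def by blast
  obtain j where j: "j < k" "b = 2 * int j \<or> b = 2 * int (k + j) + 1"
    using assms(2) unfolding parity_blocks_def by blast
  have "a - b = 2 * (int i - int j) \<or> a - b = 2 * (int k + int i - int j) + 1 \<or>
      a - b = 2 * (int i - int k - int j) - 1"
    using i(2) j(2) by auto
  then show ?thesis
    using i(1) j(1) by (elim disjE) auto
qed

lemma parity_blocks_diff_mod:
  fixes k l :: nat
  assumes "0 < l" and "a \<in> parity_blocks k" "b \<in> parity_blocks k" "d \<in> {1, 2 * k, 2 * k + 2 * l}"
  defines "p \<equiv> int (4 * k + 2 * l)"
  shows "(a - b) mod p \<noteq> int d mod p"
proof -
  have diff: "even (a - b) \<and> \<bar>a - b\<bar> < 2 * int k \<or> odd (a - b) \<and> 1 < \<bar>a - b\<bar> \<and> \<bar>a - b\<bar> < 4 * int k"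
    using parity_blocks_diff[OF assms(2,3)] .
  then have "k > 0"
    by auto
  then have "int d mod p = int d"
    using assms(4) unfolding p_def by (auto intro: mod_pos_pos_trivial)
  moreover have "(a - b) mod p = a - b \<or> (a - b) mod p = a - b + p"
  proof -
    have "\<bar>a - b\<bar> < p"
      using diff unfolding p_def by auto
    then show ?thesis
      by (smt (verit) mod_pos_pos_trivial mod_add_self2)
  qed
  moreover have "a - b \<noteq> int d" "a - b \<noteq> int d - p"
    using diff assms(1,4) unfolding p_def by (auto simp del: even_diff)
  ultimately show ?thesis
    by auto
qed

theorem lemma30:
  fixes k l :: nat
  assumes "1 \<le> l" and "l \<le> k"
  shows "ereal (real (2 * k) / real (4 * k + 2 * l))
           \<le> independence_ratio {1, 2 * k, 2 * k + 2 * l}"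
proof -
  define p where "p = 4 * k + 2 * l"
  define A where "A = {x. x mod int p \<in> parity_blocks k}"
  have blocks: "parity_blocks k \<subseteq> {0..<int p}"
    using parity_blocks_subset[of k] unfolding p_def by fastforce
  have "dist_independent {1, 2 * k, 2 * k + 2 * l} A"
    unfolding A_def p_def
    by (rule dist_independent_periodic) (use parity_blocks_diff_mod assms(1) in auto)
  have "ereal (real (2 * k) / real p) = ereal (card (parity_blocks k) / p)"
    by (simp add: card_parity_blocks)
  also have "\<dots> \<le> upper_density A"
    unfolding A_def by (rule upper_density_periodic_ge[OF _ blocks]) (use assms(1) p_def in simp)
  also have "\<dots> \<le> independence_ratio {1, 2 * k, 2 * k + 2 * l}"
    unfolding independence_ratio_def
    by (rule SUP_upper) (use \<open>dist_independent {1, 2 * k, 2 * k + 2 * l} A\<close> in simp)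
  finally show ?thesis
    unfolding p_def .
qed

end
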